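(* Let $\gamma_a,\gamma_s>0$, $\lambda\ge0$, $q>0$, $\sigma_B>0$, $\varepsilon_a\in(0,2)$, and let $\beta_a,\beta_s:\mathbb R\to\mathbb R$ be globally Lipschitz continuous with $\beta_a\ge0$, $\beta_s>0$. For every $(T_a^{(0)},T_s^{(0)})\in[0,+\infty)^2$, the solution $(T_a(t),T_s(t))$ of \[ \begin{cases} \gamma_a T_a'=-\lambda(T_a-T_s)+\varepsilon_a\sigma_B|T_s|^3T_s-2\varepsilon_a\sigma_B|T_a|^3T_a+q\beta_a(T_a),\\ \gamma_s T_s'=-\lambda(T_s-T_a)-\sigma_B|T_s|^3T_s+\varepsilon_a\sigma_B|T_a|^3T_a+q\beta_s(T_s),\\ T_a(0)=T_a^{(0)},\quad T_s(0)=T_s^{(0)} \end{cases} \] converges as $t\to+\infty$ to some equilibrium point of the system. Moreover, there exists $T\ge0$ such that $t\mapsto T_a(t)$ and $t\mapsto T_s(t)$ are monotone on $[T,+\infty)$. *)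

theory Defs
  imports "HOL-Analysis.Analysis"
begin

text \<open>Right-hand sides of the two-layer energy balance system
  (already multiplied by gamma_a, gamma_s respectively).\<close>

definition Fa :: "real \<Rightarrow> real \<Rightarrow> real \<Rightarrow> real \<Rightarrow> (real \<Rightarrow> real) \<Rightarrow> real \<Rightarrow> real \<Rightarrow> real" where
  "Fa lam q sigB epsa betaa Ta Ts =
     - lam * (Ta - Ts) + epsa * sigB * \<bar>Ts\<bar>^3 * Ts - 2 * epsa * sigB * \<bar>Ta\<bar>^3 * Ta
     + q * betaa Ta"

definition Fs :: "real \<Rightarrow> real \<Rightarrow> real \<Rightarrow> real \<Rightarrow> (real \<Rightarrow> real) \<Rightarrow> real \<Rightarrow> real \<Rightarrow> real" where
  "Fs lam q sigB epsa betas Ta Ts =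
     - lam * (Ts - Ta) - sigB * \<bar>Ts\<bar>^3 * Ts + epsa * sigB * \<bar>Ta\<bar>^3 * Ta
     + q * betas Ts"

definition is_equilibrium ::
  "real \<Rightarrow> real \<Rightarrow> real \<Rightarrow> real \<Rightarrow> (real \<Rightarrow> real) \<Rightarrow> (real \<Rightarrow> real) \<Rightarrow> real \<times> real \<Rightarrow> bool" where
  "is_equilibrium lam q sigB epsa betaa betas p \<longleftrightarrow>
     Fa lam q sigB epsa betaa (fst p) (snd p) = 0 \<and> Fs lam q sigB epsa betas (fst p) (snd p) = 0"

end

(*
  The vector field is cooperative: the right-hand side for T_a is nondecreasing in T_s and
  vice versa.  For such planar systems the flow preserves the componentwise order
  (Kamke-Mueller): the squared distance of the difference of two solutions from the
  nonnegative quadrant satisfies a Gronwall inequality.  Comparing a solution with its own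
  time shift and letting the shift tend to 0 shows that once both velocity components have
  a common sign, they keep it.  Hence either this happens at some time, or neither velocity
  component ever vanishes and each keeps a constant sign; in both cases T_a and T_s are
  eventually monotone.  The quartic radiation terms make every large box
  [-A, A] x [-B, B] with B^4 = (1 + eps_a/2) A^4 forward invariant, so the solution is
  bounded, the monotone components converge, and the limit is an equilibrium since a
  bounded function cannot have a derivative with nonzero limit.
*)
theory Submission
  imports Defs "HOL-Real_Asymp.Real_Asymp"
begin

section \<open>Elementary real analysis\<close>

lemma has_real_derivative_of_quadratic_remainder:
  fixes f :: "real \<Rightarrow> real"
  assumes "\<And>y. \<bar>f y - f x - D * (y - x)\<bar> \<le> C * (y - x)^2"
  shows "(f has_real_derivative D) (at x)"
  unfolding has_field_derivative_iff
proof (rule LIM_zero_cancel, rule Lim_null_comparison)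
  show "\<forall>\<^sub>F y in at x. norm ((f y - f x) / (y - x) - D) \<le> C * \<bar>y - x\<bar>"
  proof (rule eventually_at_filter[THEN iffD2, OF always_eventually], intro allI impI)
    fix y assume "y \<noteq> x"
    then have "(f y - f x) / (y - x) - D = (f y - f x - D * (y - x)) / (y - x)"
      by (simp add: field_simps)
    also have "\<bar>\<dots>\<bar> \<le> C * (y - x)^2 / \<bar>y - x\<bar>"
      using assms[of y] by (simp add: abs_divide divide_right_mono)
    also have "\<dots> = C * \<bar>y - x\<bar>"
      using \<open>y \<noteq> x\<close> by (simp add: divide_simps power2_eq_square)
    finally show "norm ((f y - f x) / (y - x) - D) \<le> C * \<bar>y - x\<bar>" by simp
  qed
  show "((\<lambda>y. C * \<bar>y - x\<bar>) \<longlongrightarrow> 0) (at x)"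
    by (intro tendsto_eq_intros) auto
qed

lemma has_real_derivative_times_abs: "((\<lambda>s::real. s * \<bar>s\<bar>) has_real_derivative 2 * \<bar>x\<bar>) (at x)"
proof (rule has_real_derivative_of_quadratic_remainder)
  fix y :: real
  have sq: "(y - x)^2 = y^2 - 2 * x * y + x^2" by (simp add: power2_eq_square algebra_simps)
  consider "x \<ge> 0" "y \<ge> 0" | "x < 0" "y < 0" | "x * y \<le> 0"
    by (metis linorder_not_le mult_nonneg_nonpos mult_nonpos_nonneg order.strict_implies_order)
  then show "\<bar>y * \<bar>y\<bar> - x * \<bar>x\<bar> - 2 * \<bar>x\<bar> * (y - x)\<bar> \<le> 1 * (y - x)^2"
  proof cases
    case 1
    then have "y * \<bar>y\<bar> - x * \<bar>x\<bar> - 2 * \<bar>x\<bar> * (y - x) = (y - x)^2" by (simp add: power2_eq_square algebra_simps)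
    then show ?thesis by simp
  next
    case 2
    then have "y * \<bar>y\<bar> - x * \<bar>x\<bar> - 2 * \<bar>x\<bar> * (y - x) = -((y - x)^2)" by (simp add: power2_eq_square algebra_simps)
    then show ?thesis by simp
  next
    case 3
    have "\<bar>y * \<bar>y\<bar> - x * \<bar>x\<bar> - 2 * \<bar>x\<bar> * (y - x)\<bar> = \<bar>y * \<bar>y\<bar> + x * \<bar>x\<bar> - 2 * (\<bar>x\<bar> * y)\<bar>"
      by (simp add: algebra_simps)
    also have "\<dots> \<le> y^2 + x^2 + 2 * \<bar>x * y\<bar>"
    proof -
      have "\<bar>y * \<bar>y\<bar>\<bar> = y^2" "\<bar>x * \<bar>x\<bar>\<bar> = x^2" "\<bar>2 * (\<bar>x\<bar> * y)\<bar> = 2 * \<bar>x * y\<bar>"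
        by (simp_all add: abs_mult power2_eq_square)
      then show ?thesis
        using order_trans[OF abs_triangle_ineq4 add_right_mono[OF abs_triangle_ineq]] by metis
    qed
    also have "\<dots> = (y - x)^2"
      using 3 by (simp add: sq)
    finally show ?thesis by simp
  qed
qed

lemma has_real_derivative_signed_quartic:
  "((\<lambda>s::real. \<bar>s\<bar>^3 * s) has_real_derivative 4 * \<bar>x\<bar>^3) (at x)"
proof -
  have "(\<lambda>s::real. \<bar>s\<bar>^3 * s) = (\<lambda>s. s * \<bar>s\<bar> * s^2)"
  proof
    fix s :: real show "\<bar>s\<bar>^3 * s = s * \<bar>s\<bar> * s^2"
      by (cases "s \<ge> 0") (simp_all add: power3_eq_cube power2_eq_square)
  qed
  moreover have "((\<lambda>s. s * \<bar>s\<bar> * s^2) has_real_derivative 4 * \<bar>x\<bar>^3) (at x)"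
    by (rule DERIV_cong[OF DERIV_mult[OF has_real_derivative_times_abs DERIV_pow[of 2 x]]])
      (cases "x \<ge> 0"; simp add: power3_eq_cube power2_eq_square)
  ultimately show ?thesis by simp
qed

lemma has_real_derivative_min0_sq:
  "((\<lambda>s::real. (min s 0)^2) has_real_derivative 2 * min x 0) (at x)"
proof -
  have "(\<lambda>s::real. (min s 0)^2) = (\<lambda>s. (s^2 - s * \<bar>s\<bar>) / 2)"
  proof
    fix s :: real show "(min s 0)^2 = (s^2 - s * \<bar>s\<bar>) / 2"
      by (cases "s \<ge> 0") (simp_all add: power2_eq_square)
  qed
  moreover have "((\<lambda>s. (s^2 - s * \<bar>s\<bar>) / 2) has_real_derivative 2 * min x 0) (at x)"
    by (rule DERIV_cong[OF DERIV_cdivide[OF DERIV_diff[OF DERIV_pow[of 2 x] has_real_derivative_times_abs]]])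
      (cases "x \<ge> 0"; simp)
  ultimately show ?thesis by simp
qed

lemma signed_quartic_mono: "x \<le> y \<Longrightarrow> \<bar>x\<bar>^3 * x \<le> \<bar>y\<bar>^3 * (y::real)"
  by (rule DERIV_nonneg_imp_nondecreasing) (auto intro: has_real_derivative_signed_quartic)

lemma signed_quartic_lipschitz_on:
  assumes "0 \<le> M"
  shows "(4 * M^3)-lipschitz_on {-M..M} (\<lambda>s::real. \<bar>s\<bar>^3 * s)"
proof (rule lipschitz_onI)
  fix x y :: real assume "x \<in> {-M..M}" "y \<in> {-M..M}"
  then show "dist (\<bar>x\<bar>^3 * x) (\<bar>y\<bar>^3 * y) \<le> 4 * M^3 * dist x y"
    unfolding dist_real_def
    by (intro field_differentiable_bound[of "{-M..M}", simplified])
      (auto intro!: has_field_derivative_at_within[OF has_real_derivative_signed_quartic] power_mono)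
qed (use assms in simp)

lemma DERIV_le_linear_imp_exp_bound:
  fixes \<phi> \<phi>' :: "real \<Rightarrow> real"
  assumes deriv: "\<And>s. t0 \<le> s \<Longrightarrow> s \<le> t \<Longrightarrow> (\<phi> has_real_derivative \<phi>' s) (at s)"
    and growth: "\<And>s. t0 \<le> s \<Longrightarrow> s \<le> t \<Longrightarrow> \<phi>' s \<le> K * \<phi> s"
    and "t0 \<le> t"
  shows "\<phi> t \<le> \<phi> t0 * exp (K * (t - t0))"
proof -
  have "\<phi> t * exp (- K * (t - t0)) \<le> \<phi> t0 * exp (- K * (t0 - t0))"
  proof (rule DERIV_nonpos_imp_nonincreasing[OF \<open>t0 \<le> t\<close>])
    fix s assume s: "t0 \<le> s" "s \<le> t"
    have "((\<lambda>s. \<phi> s * exp (- K * (s - t0))) has_real_derivative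
        (\<phi>' s - K * \<phi> s) * exp (- K * (s - t0))) (at s)"
      by (auto intro!: derivative_eq_intros deriv[OF s] simp: algebra_simps)
    moreover have "(\<phi>' s - K * \<phi> s) * exp (- K * (s - t0)) \<le> 0"
      using growth[OF s] by (simp add: mult_nonpos_nonneg)
    ultimately show "\<exists>y. ((\<lambda>s. \<phi> s * exp (- K * (s - t0))) has_real_derivative y) (at s) \<and> y \<le> 0"
      by blast
  qed
  then have "\<phi> t * exp (- K * (t - t0)) * exp (K * (t - t0)) \<le> \<phi> t0 * exp (K * (t - t0))"
    by (intro mult_right_mono) auto
  then show ?thesis
    by (simp add: mult.assoc flip: exp_add)
qed

lemma eventually_nonpos_at_right:
  fixes g :: "real \<Rightarrow> real"
  assumes deriv: "(g has_real_derivative g') (at \<tau>)"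
    and "g \<tau> \<le> 0" and boundary: "g \<tau> = 0 \<Longrightarrow> g' < 0"
  shows "\<forall>\<^sub>F s in at_right \<tau>. g s \<le> 0"
proof (cases "g \<tau> = 0")
  case True
  obtain d where d: "d > 0" "\<And>h. 0 < h \<Longrightarrow> h < d \<Longrightarrow> g (\<tau> + h) < g \<tau>"
    using has_real_derivative_neg_dec_right[OF deriv boundary[OF True]] by blast
  then show ?thesis
    unfolding eventually_at_right_field
  proof (intro exI[of _ "\<tau> + d"] conjI allI impI)
    fix s assume "\<tau> < s" "s < \<tau> + d"
    then show "g s \<le> 0" using d(2)[of "s - \<tau>"] True by simp
  qed simp
next
  case False
  have "(g \<longlongrightarrow> g \<tau>) (at_right \<tau>)"
    using DERIV_isCont[OF deriv] unfolding isCont_def by (rule tendsto_mono[OF at_le, rotated]) simp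
  then have "\<forall>\<^sub>F s in at_right \<tau>. g s < 0"
    using False \<open>g \<tau> \<le> 0\<close> by (intro order_tendstoD(2)) auto
  then show ?thesis
    by eventually_elim simp
qed

lemma isCont_nonpos_if_nonpos_left:
  fixes g :: "real \<Rightarrow> real"
  assumes "isCont g \<tau>" and "a < \<tau>" and "\<And>s. a < s \<Longrightarrow> s < \<tau> \<Longrightarrow> g s \<le> 0"
  shows "g \<tau> \<le> 0"
proof (rule tendsto_upperbound)
  show "(g \<longlongrightarrow> g \<tau>) (at_left \<tau>)"
    using assms(1) unfolding isCont_def by (rule tendsto_mono[OF at_le, rotated]) simp
  show "\<forall>\<^sub>F s in at_left \<tau>. g s \<le> 0"
    using eventually_at_left_real[OF \<open>a < \<tau>\<close>] by eventually_elim (use assms(3) in simp)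
qed simp

lemma barriers_stay_nonpos:
  fixes B :: "((real \<Rightarrow> real) \<times> (real \<Rightarrow> real)) set"
  assumes "finite B"
    and deriv: "\<And>g g' t. (g, g') \<in> B \<Longrightarrow> t0 \<le> t \<Longrightarrow> (g has_real_derivative g' t) (at t)"
    and init: "\<And>g g'. (g, g') \<in> B \<Longrightarrow> g t0 \<le> 0"
    and boundary: "\<And>g g' t. (g, g') \<in> B \<Longrightarrow> t0 \<le> t \<Longrightarrow> \<forall>(h, h')\<in>B. h t \<le> 0 \<Longrightarrow>
       g t = 0 \<Longrightarrow> g' t < 0"
    and "t0 \<le> t"
  shows "\<forall>(g, g')\<in>B. g t \<le> 0"
proof (rule ccontr)
  define inside where "inside s \<longleftrightarrow> (\<forall>(g, g')\<in>B. g s \<le> 0)" for s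
  define E where "E = {s. t0 \<le> s \<and> \<not> inside s}"
  define \<tau> where "\<tau> = Inf E"
  assume "\<not> (\<forall>(g, g')\<in>B. g t \<le> 0)"
  then have "t \<in> E" using \<open>t0 \<le> t\<close> by (simp add: E_def inside_def)
  have "bdd_below E" by (auto simp: E_def intro: bdd_belowI[of _ t0])
  have "t0 \<le> \<tau>"
    unfolding \<tau>_def using \<open>t \<in> E\<close> by (intro cInf_greatest) (auto simp: E_def)
  have before: "inside s" if "t0 \<le> s" "s < \<tau>" for s
    using cInf_lower[OF _ \<open>bdd_below E\<close>, of s] that by (force simp: E_def \<tau>_def)
  have at: "inside \<tau>"
    unfolding inside_def
  proof (intro ballI, clarify)
    fix g g' assume "(g, g') \<in> B"
    show "g \<tau> \<le> 0"
    proof (cases "\<tau> = t0")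
      case False
      with \<open>t0 \<le> \<tau>\<close> have "t0 < \<tau>" by simp
      show ?thesis
      proof (rule isCont_nonpos_if_nonpos_left[OF DERIV_isCont[OF deriv] \<open>t0 < \<tau>\<close>])
        fix s assume "t0 < s" "s < \<tau>"
        then show "g s \<le> 0" using before[of s] \<open>(g, g') \<in> B\<close> by (auto simp: inside_def)
      qed (use \<open>(g, g') \<in> B\<close> \<open>t0 \<le> \<tau>\<close> in simp_all)
    qed (use init \<open>(g, g') \<in> B\<close> in simp)
  qed
  have "\<forall>\<^sub>F s in at_right \<tau>. \<forall>(g, g')\<in>B. g s \<le> 0"
    unfolding case_prod_beta using \<open>finite B\<close>
  proof (rule eventually_ball_finite, safe)
    fix g g' assume "(g, g') \<in> B"
    with at show "\<forall>\<^sub>F s in at_right \<tau>. fst (g, g') s \<le> 0"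
      by (auto intro!: eventually_nonpos_at_right deriv boundary \<open>t0 \<le> \<tau>\<close> simp: inside_def)
  qed
  then obtain b where "\<tau> < b" and after: "\<And>s. \<tau> < s \<Longrightarrow> s < b \<Longrightarrow> inside s"
    unfolding eventually_at_right_field inside_def by blast
  have "b \<le> \<tau>"
    unfolding \<tau>_def using \<open>t \<in> E\<close>
  proof (intro cInf_greatest)
    fix e assume "e \<in> E"
    then show "b \<le> e"
      using before[of e] at after[of e] by (force simp: E_def)
  qed auto
  with \<open>\<tau> < b\<close> show False by simp
qed

lemma mono_on_Ici_if_derivative_sign:
  fixes f f' :: "real \<Rightarrow> real"
  assumes "\<sigma> \<in> {-1, 1}"
    and deriv: "\<And>t. T \<le> t \<Longrightarrow> (f has_real_derivative f' t) (at t)"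
    and sign: "\<And>t. T \<le> t \<Longrightarrow> 0 \<le> \<sigma> * f' t"
  shows "mono_on {T..} f \<or> antimono_on {T..} f"
proof -
  have "\<sigma> * f r \<le> \<sigma> * f s" if "T \<le> r" "r \<le> s" for r s
    using \<open>r \<le> s\<close>
  proof (rule DERIV_nonneg_imp_nondecreasing)
    fix u assume "r \<le> u" "u \<le> s"
    then show "\<exists>y. ((\<lambda>t. \<sigma> * f t) has_real_derivative y) (at u) \<and> 0 \<le> y"
      using that DERIV_cmult[OF deriv] sign by (meson order.trans)
  qed
  with \<open>\<sigma> \<in> {-1, 1}\<close> show ?thesis
    by (auto intro!: mono_onI monotone_onI)
qed

lemma constant_sign_if_nonzero:
  fixes h :: "real \<Rightarrow> real"
  assumes "continuous_on {T..} h" and nonzero: "\<And>t. T \<le> t \<Longrightarrow> h t \<noteq> 0"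
  shows "\<exists>\<sigma>\<in>{-1, 1}. \<forall>t\<ge>T. 0 < \<sigma> * h t"
proof (rule ccontr)
  assume "\<not> ?thesis"
  then have "\<not> (\<forall>t\<ge>T. 0 < 1 * h t)" "\<not> (\<forall>t\<ge>T. 0 < -1 * h t)"
    by blast+
  then obtain r s where "T \<le> r" "h r \<le> 0" "T \<le> s" "0 \<le> h s"
    by (auto simp: not_less)
  then have "h r \<in> h ` {T..}" "h s \<in> h ` {T..}" by auto
  moreover have "connected (h ` {T..})"
    by (rule connected_continuous_image[OF assms(1)]) simp
  ultimately have "0 \<in> h ` {T..}"
    using connectedD_interval \<open>h r \<le> 0\<close> \<open>0 \<le> h s\<close> by blast
  with nonzero show False by auto
qed

lemma mono_on_bdd_above_convergent_at_top:
  fixes f :: "real \<Rightarrow> real"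
  assumes mono: "mono_on {T..} f" and bdd: "bdd_above (f ` {T..})"
  shows "(f \<longlongrightarrow> Sup (f ` {T..})) at_top"
proof (rule increasing_tendsto)
  show "\<forall>\<^sub>F t in at_top. f t \<le> Sup (f ` {T..})"
    unfolding eventually_at_top_linorder using bdd by (auto intro!: cSup_upper)
  fix y assume "y < Sup (f ` {T..})"
  then obtain s where "T \<le> s" "y < f s"
    using less_cSup_iff[OF _ bdd] by auto
  then show "\<forall>\<^sub>F t in at_top. y < f t"
    unfolding eventually_at_top_linorder using mono
    by (auto intro!: exI[of _ s] elim!: less_le_trans mono_onD)
qed

lemma mono_bounded_convergent_at_top:
  fixes f :: "real \<Rightarrow> real"
  assumes "mono_on {T..} f \<or> antimono_on {T..} f"
    and "\<And>t. T \<le> t \<Longrightarrow> f t \<in> S" and "compact S"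
  shows "\<exists>l\<in>S. (f \<longlongrightarrow> l) at_top"
proof -
  obtain C where C: "\<And>t. T \<le> t \<Longrightarrow> \<bar>f t\<bar> \<le> C"
    using compact_imp_bounded[OF \<open>compact S\<close>] assms(2) by (force simp: bounded_real)
  have "\<exists>l. (f \<longlongrightarrow> l) at_top"
    using assms(1)
  proof
    assume "mono_on {T..} f"
    then show ?thesis
      using C by (intro exI[of _ "Sup (f ` {T..})"] mono_on_bdd_above_convergent_at_top)
        (auto intro!: bdd_aboveI[of _ C] simp: abs_le_iff)
  next
    assume "antimono_on {T..} f"
    then have "mono_on {T..} (\<lambda>t. - f t)"
      by (auto simp: monotone_on_def)
    then have "((\<lambda>t. - f t) \<longlongrightarrow> Sup ((\<lambda>t. - f t) ` {T..})) at_top"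
      using C by (intro mono_on_bdd_above_convergent_at_top) (auto intro!: bdd_aboveI[of _ C] simp: abs_le_iff)
    then show ?thesis
      using tendsto_minus by fastforce
  qed
  moreover have "\<forall>\<^sub>F t in at_top. f t \<in> S"
    unfolding eventually_at_top_linorder using assms(2) by blast
  ultimately show ?thesis
    using Lim_in_closed_set[OF compact_imp_closed[OF \<open>compact S\<close>]] by fastforce
qed

lemma derivative_limit_zero_if_bounded:
  fixes x x' :: "real \<Rightarrow> real"
  assumes deriv: "\<And>t. T \<le> t \<Longrightarrow> (x has_real_derivative x' t) (at t)"
    and lim: "(x' \<longlongrightarrow> D) at_top" and bound: "\<And>t. T \<le> t \<Longrightarrow> \<bar>x t\<bar> \<le> C"
  shows "D = 0"
proof (rule ccontr)
  assume "D \<noteq> 0"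
  define \<sigma> where "\<sigma> = sgn D"
  have "((\<lambda>t. \<sigma> * x' t) \<longlongrightarrow> \<bar>D\<bar>) at_top"
    using tendsto_mult_left[OF lim, of \<sigma>] by (simp add: \<sigma>_def abs_sgn mult.commute)
  then obtain T1 where T1: "\<And>t. T1 \<le> t \<Longrightarrow> \<bar>D\<bar> / 2 < \<sigma> * x' t"
    using \<open>D \<noteq> 0\<close> order_tendstoD(1)[of _ "\<bar>D\<bar>" _ "\<bar>D\<bar> / 2"]
    by (force simp: eventually_at_top_linorder)
  define r where "r = max T T1"
  define s where "s = r + (2 * C + 1) / (\<bar>D\<bar> / 2)"
  have "0 \<le> C" using bound[of T] by linarith
  then have "r \<le> s" using \<open>D \<noteq> 0\<close> by (simp add: s_def)
  have "\<sigma> * x r - \<bar>D\<bar> / 2 * r \<le> \<sigma> * x s - \<bar>D\<bar> / 2 * s"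
  proof (rule DERIV_nonneg_imp_nondecreasing[OF \<open>r \<le> s\<close>])
    fix u assume "r \<le> u" "u \<le> s"
    then have "((\<lambda>t. \<sigma> * x t - \<bar>D\<bar> / 2 * t) has_real_derivative \<sigma> * x' u - \<bar>D\<bar> / 2) (at u)"
      and "0 \<le> \<sigma> * x' u - \<bar>D\<bar> / 2"
      using deriv[of u] T1[of u] by (auto intro!: derivative_eq_intros simp: r_def)
    then show "\<exists>y. ((\<lambda>t. \<sigma> * x t - \<bar>D\<bar> / 2 * t) has_real_derivative y) (at u) \<and> 0 \<le> y"
      by blast
  qed
  moreover have "\<bar>D\<bar> / 2 * (s - r) = 2 * C + 1"
    using \<open>D \<noteq> 0\<close> by (simp add: s_def)
  moreover have "\<bar>\<sigma> * x r\<bar> \<le> C" "\<bar>\<sigma> * x s\<bar> \<le> C"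
    using bound[of r] bound[of s] \<open>r \<le> s\<close> by (auto simp: r_def \<sigma>_def abs_mult abs_sgn_eq)
  ultimately show False
    by (simp add: algebra_simps abs_le_iff)
qed

lemma eventually_lt_quartic_at_top:
  fixes a b m :: real
  assumes "0 < m"
  shows "\<forall>\<^sub>F x in at_top. a * x + b < m * x^4"
  using assms by real_asymp

section \<open>Planar cooperative systems\<close>

definition sqdist_nonneg_quadrant :: "real \<Rightarrow> real \<Rightarrow> real" where
  "sqdist_nonneg_quadrant a b = (min a 0)^2 + (min b 0)^2"

lemma sqdist_nonneg_quadrant_nonneg: "0 \<le> sqdist_nonneg_quadrant a b"
  by (simp add: sqdist_nonneg_quadrant_def)

lemma sqdist_nonneg_quadrant_eq_0_iff: "sqdist_nonneg_quadrant a b = 0 \<longleftrightarrow> 0 \<le> a \<and> 0 \<le> b"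
  by (auto simp: sqdist_nonneg_quadrant_def min_def add_nonneg_eq_0_iff)

lemma sqdist_nonneg_quadrant_divide:
  "0 < h \<Longrightarrow> sqdist_nonneg_quadrant (a / h) (b / h) = sqdist_nonneg_quadrant a b / h^2"
  by (auto simp: sqdist_nonneg_quadrant_def min_def divide_le_0_iff power_divide add_divide_distrib
      not_le less_imp_le)

lemma tendsto_sqdist_nonneg_quadrant [tendsto_intros]:
  "(f \<longlongrightarrow> a) F \<Longrightarrow> (g \<longlongrightarrow> b) F \<Longrightarrow>
   ((\<lambda>x. sqdist_nonneg_quadrant (f x) (g x)) \<longlongrightarrow> sqdist_nonneg_quadrant a b) F"
  unfolding sqdist_nonneg_quadrant_def by (intro tendsto_intros)

lemma lipschitz_on_Times_realD:
  assumes "L-lipschitz_on (X \<times> Y) (\<lambda>(x, y). f x y)"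
    and "x \<in> X" "y \<in> Y" "x' \<in> X" "y' \<in> Y"
  shows "\<bar>f x y - f x' y'\<bar> \<le> L * sqrt ((x - x')^2 + (y - y')^2)"
  using lipschitz_onD[OF assms(1), of "(x, y)" "(x', y')"] assms(2-)
  by (simp add: dist_Pair_Pair dist_real_def)

lemma min_diff_mult_le_sqdist_nonneg_quadrant:
  fixes f :: "real \<Rightarrow> real \<Rightarrow> real"
  assumes mono: "\<And>x y y'. y \<le> y' \<Longrightarrow> f x y \<le> f x y'"
    and lipschitz: "\<And>x y x' y'. x \<in> X \<Longrightarrow> y \<in> Y \<Longrightarrow> x' \<in> X \<Longrightarrow> y' \<in> Y \<Longrightarrow>
      \<bar>f x y - f x' y'\<bar> \<le> L * sqrt ((x - x')^2 + (y - y')^2)"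
    and "0 \<le> L" and "a1 \<in> X" "a2 \<in> Y" "b1 \<in> X" "b2 \<in> Y"
  shows "min (a1 - b1) 0 * (f a1 a2 - f b1 b2) \<le> L * sqdist_nonneg_quadrant (a1 - b1) (a2 - b2)"
proof (cases "a1 < b1")
  case True
  define d m where "d = a1 - b1" and "m = min (a2 - b2) 0"
  \<comment> \<open>By monotonicity, \<open>a2\<close> may be lowered to \<open>min a2 b2\<close>;
    then only the negative part of \<open>a2 - b2\<close> enters.\<close>
  have "min a2 b2 - b2 = m" by (simp add: m_def min_def)
  have "min a2 b2 \<in> Y" using \<open>a2 \<in> Y\<close> \<open>b2 \<in> Y\<close> by (simp add: min_def)
  have "min (a1 - b1) 0 * (f a1 a2 - f b1 b2) \<le> d * (f a1 (min a2 b2) - f b1 b2)"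
    using True mono[of "min a2 b2" a2 a1] by (simp add: d_def mult_left_mono_neg)
  also have "\<dots> \<le> \<bar>d\<bar> * \<bar>f a1 (min a2 b2) - f b1 b2\<bar>"
    by (simp add: abs_mult[symmetric])
  also have "\<dots> \<le> \<bar>d\<bar> * (L * sqrt (d^2 + m^2))"
    using lipschitz[OF \<open>a1 \<in> X\<close> \<open>min a2 b2 \<in> Y\<close> \<open>b1 \<in> X\<close> \<open>b2 \<in> Y\<close>] \<open>min a2 b2 - b2 = m\<close>
    by (intro mult_left_mono) (simp_all add: d_def)
  also have "\<dots> \<le> sqrt (d^2 + m^2) * (L * sqrt (d^2 + m^2))"
    using \<open>0 \<le> L\<close> by (intro mult_right_mono real_le_rsqrt) simp_all
  also have "\<dots> = L * sqdist_nonneg_quadrant (a1 - b1) (a2 - b2)"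
    using True by (simp add: sqdist_nonneg_quadrant_def d_def m_def)
  finally show ?thesis .
qed (simp add: \<open>0 \<le> L\<close> sqdist_nonneg_quadrant_nonneg)

locale cooperative_system =
  fixes f1 f2 :: "real \<Rightarrow> real \<Rightarrow> real"
  assumes f1_mono: "\<And>x y y'. y \<le> y' \<Longrightarrow> f1 x y \<le> f1 x y'"
    and f2_mono: "\<And>x x' y. x \<le> x' \<Longrightarrow> f2 x y \<le> f2 x' y"
begin

definition solves :: "real \<Rightarrow> (real \<Rightarrow> real) \<Rightarrow> (real \<Rightarrow> real) \<Rightarrow> bool" where
  "solves t0 x y \<longleftrightarrow> (\<forall>t\<ge>t0. (x has_real_derivative f1 (x t) (y t)) (at t) \<and>
                                 (y has_real_derivative f2 (x t) (y t)) (at t))"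

lemma solves_if_derivatives_within_Ici:
  assumes "\<And>t. a \<le> t \<Longrightarrow> (x has_real_derivative f1 (x t) (y t)) (at t within {a..})"
    and "\<And>t. a \<le> t \<Longrightarrow> (y has_real_derivative f2 (x t) (y t)) (at t within {a..})"
    and "a < t0"
  shows "solves t0 x y"
  unfolding solves_def
proof (intro allI impI conjI)
  fix t assume "t0 \<le> t"
  with \<open>a < t0\<close> have "at t within {a..} = at t"
    by (intro at_within_interior) simp
  with assms(1,2)[of t] \<open>a < t0\<close> \<open>t0 \<le> t\<close>
  show "(x has_real_derivative f1 (x t) (y t)) (at t)" "(y has_real_derivative f2 (x t) (y t)) (at t)"
    by simp_all
qed

lemma box_forward_invariant:
  assumes "solves t0 x y" and "x t0 \<in> {a1..b1}" "y t0 \<in> {a2..b2}"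
    and "f1 b1 b2 < 0" "f2 b1 b2 < 0" "0 < f1 a1 a2" "0 < f2 a1 a2" and "t0 \<le> t"
  shows "x t \<in> {a1..b1} \<and> y t \<in> {a2..b2}"
proof -
  \<comment> \<open>By cooperativity, the signs at the two corners make the field point inward
    on every face.\<close>
  define B where "B = {(\<lambda>t. x t - b1, \<lambda>t. f1 (x t) (y t)), (\<lambda>t. a1 - x t, \<lambda>t. - f1 (x t) (y t)),
    (\<lambda>t. y t - b2, \<lambda>t. f2 (x t) (y t)), (\<lambda>t. a2 - y t, \<lambda>t. - f2 (x t) (y t))}"
  have "\<forall>(g, g')\<in>B. g t \<le> 0"
  proof (rule barriers_stay_nonpos[OF _ _ _ _ \<open>t0 \<le> t\<close>])
    fix g g' s assume "(g, g') \<in> B" "t0 \<le> s"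
    then show "(g has_real_derivative g' s) (at s)"
      using \<open>solves t0 x y\<close> by (auto simp: B_def solves_def intro!: derivative_eq_intros)
  next
    fix g g' s assume "(g, g') \<in> B" "t0 \<le> s" and inside: "\<forall>(h, h')\<in>B. h s \<le> 0" and "g s = 0"
    have "x s \<le> b1" "a1 \<le> x s" "y s \<le> b2" "a2 \<le> y s"
      using inside by (auto simp: B_def)
    with \<open>(g, g') \<in> B\<close> \<open>g s = 0\<close> assms(4-7) f1_mono[of "y s" b2 b1] f1_mono[of a2 "y s" a1]
      f2_mono[of "x s" b1 b2] f2_mono[of a1 "x s" a2]
    show "g' s < 0"
      by (auto simp: B_def)
  qed (use assms(2,3) in \<open>auto simp: B_def\<close>)
  then show ?thesis
    by (auto simp: B_def)
qed

end

locale lipschitz_cooperative_system = cooperative_system +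
  fixes X Y :: "real set" and L :: real
  assumes lipschitz_f1: "L-lipschitz_on (X \<times> Y) (\<lambda>(x, y). f1 x y)"
    and lipschitz_f2: "L-lipschitz_on (X \<times> Y) (\<lambda>(x, y). f2 x y)"
begin

definition solves_in :: "real \<Rightarrow> (real \<Rightarrow> real) \<Rightarrow> (real \<Rightarrow> real) \<Rightarrow> bool" where
  "solves_in t0 x y \<longleftrightarrow> solves t0 x y \<and> (\<forall>t\<ge>t0. x t \<in> X \<and> y t \<in> Y)"

lemma solves_in_shift:
  "solves_in t0 x y \<Longrightarrow> 0 \<le> h \<Longrightarrow> solves_in t0 (\<lambda>t. x (t + h)) (\<lambda>t. y (t + h))"
  unfolding solves_in_def solves_def by (auto simp flip: DERIV_shift)

lemma solves_in_mono: "solves_in t0 x y \<Longrightarrow> t0 \<le> t1 \<Longrightarrow> solves_in t1 x y"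
  by (simp add: solves_in_def solves_def)

lemma solves_in_comparison:
  assumes "solves_in t0 x1 y1" "solves_in t0 x2 y2" "t0 \<le> t"
  shows "sqdist_nonneg_quadrant (x1 t - x2 t) (y1 t - y2 t)
    \<le> sqdist_nonneg_quadrant (x1 t0 - x2 t0) (y1 t0 - y2 t0) * exp (4 * L * (t - t0))"
proof (rule DERIV_le_linear_imp_exp_bound[OF _ _ \<open>t0 \<le> t\<close>])
  fix s assume "t0 \<le> s"
  let ?d1 = "f1 (x1 s) (y1 s) - f1 (x2 s) (y2 s)" and ?d2 = "f2 (x1 s) (y1 s) - f2 (x2 s) (y2 s)"
  let ?m1 = "min (x1 s - x2 s) 0" and ?m2 = "min (y1 s - y2 s) 0"
  show "((\<lambda>s. sqdist_nonneg_quadrant (x1 s - x2 s) (y1 s - y2 s)) has_real_derivative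
      2 * ?m1 * ?d1 + 2 * ?m2 * ?d2) (at s)"
    using assms(1,2) \<open>t0 \<le> s\<close> unfolding sqdist_nonneg_quadrant_def solves_in_def solves_def
    by (auto intro!: DERIV_add DERIV_chain2[OF has_real_derivative_min0_sq] DERIV_diff)
  have "0 \<le> L" using lipschitz_f1 by (rule lipschitz_on_nonneg)
  have in_box: "x1 s \<in> X" "y1 s \<in> Y" "x2 s \<in> X" "y2 s \<in> Y"
    using assms(1,2) \<open>t0 \<le> s\<close> by (auto simp: solves_in_def)
  have lipschitz_f2_swapped: "\<bar>f2 x y - f2 x' y'\<bar> \<le> L * sqrt ((y - y')^2 + (x - x')^2)"
    if "x \<in> X" "y \<in> Y" "x' \<in> X" "y' \<in> Y" for x y x' y'
    using lipschitz_on_Times_realD[OF lipschitz_f2 that] by (simp add: add.commute)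
  have "?m1 * ?d1 \<le> L * sqdist_nonneg_quadrant (x1 s - x2 s) (y1 s - y2 s)"
    by (rule min_diff_mult_le_sqdist_nonneg_quadrant[OF f1_mono lipschitz_on_Times_realD[OF lipschitz_f1]
          \<open>0 \<le> L\<close> in_box])
  moreover have "?m2 * ?d2 \<le> L * sqdist_nonneg_quadrant (y1 s - y2 s) (x1 s - x2 s)"
    by (rule min_diff_mult_le_sqdist_nonneg_quadrant[where f = "\<lambda>y x. f2 x y", OF f2_mono
          lipschitz_f2_swapped \<open>0 \<le> L\<close> in_box(2,1,4,3)])
  ultimately show "2 * ?m1 * ?d1 + 2 * ?m2 * ?d2
      \<le> 4 * L * sqdist_nonneg_quadrant (x1 s - x2 s) (y1 s - y2 s)"
    by (simp add: sqdist_nonneg_quadrant_def add.commute)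
qed

lemma velocity_sqdist_bound:
  assumes sol: "solves_in t0 x y" and "\<sigma> \<in> {-1, 1}" and "t0 \<le> t"
  shows "sqdist_nonneg_quadrant (\<sigma> * f1 (x t) (y t)) (\<sigma> * f2 (x t) (y t))
    \<le> sqdist_nonneg_quadrant (\<sigma> * f1 (x t0) (y t0)) (\<sigma> * f2 (x t0) (y t0)) * exp (4 * L * (t - t0))"
proof -
  define E where "E = exp (4 * L * (t - t0))"
  define Q where "Q s h = sqdist_nonneg_quadrant (\<sigma> * ((x (s + h) - x s) / h)) (\<sigma> * ((y (s + h) - y s) / h))"
    for s h
  \<comment> \<open>The time shift of a solution is a solution; divide the comparison estimate
    by \<open>h\<^sup>2\<close> and let \<open>h \<rightarrow> 0\<^sup>+\<close>.\<close>
  have bound: "Q t h \<le> Q t0 h * E" if "0 < h" for h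
  proof -
    have "sqdist_nonneg_quadrant (\<sigma> * (x (t + h) - x t)) (\<sigma> * (y (t + h) - y t))
      \<le> sqdist_nonneg_quadrant (\<sigma> * (x (t0 + h) - x t0)) (\<sigma> * (y (t0 + h) - y t0)) * E"
      using \<open>\<sigma> \<in> {-1, 1}\<close> solves_in_comparison[OF sol solves_in_shift[OF sol] \<open>t0 \<le> t\<close>, of h]
        solves_in_comparison[OF solves_in_shift[OF sol] sol \<open>t0 \<le> t\<close>, of h] \<open>0 < h\<close>
      by (auto simp: E_def)
    then show ?thesis
      using \<open>0 < h\<close> by (simp add: Q_def sqdist_nonneg_quadrant_divide divide_right_mono)
  qed
  have limit: "(Q s \<longlongrightarrow> sqdist_nonneg_quadrant (\<sigma> * f1 (x s) (y s)) (\<sigma> * f2 (x s) (y s)))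
      (at_right 0)" if "t0 \<le> s" for s
  proof -
    have "((\<lambda>h. (x (s + h) - x s) / h) \<longlongrightarrow> f1 (x s) (y s)) (at 0)"
      "((\<lambda>h. (y (s + h) - y s) / h) \<longlongrightarrow> f2 (x s) (y s)) (at 0)"
      using sol that by (simp_all add: solves_in_def solves_def DERIV_def)
    then have "((\<lambda>h. (x (s + h) - x s) / h) \<longlongrightarrow> f1 (x s) (y s)) (at_right 0)"
      "((\<lambda>h. (y (s + h) - y s) / h) \<longlongrightarrow> f2 (x s) (y s)) (at_right 0)"
      by (auto intro: tendsto_mono[OF at_le[OF subset_UNIV]])
    then show ?thesis
      unfolding Q_def by (intro tendsto_intros)
  qed
  show ?thesis
    unfolding E_def[symmetric]
  proof (rule tendsto_le[of "at_right 0"])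
    show "((\<lambda>h. Q t0 h * E) \<longlongrightarrow> sqdist_nonneg_quadrant (\<sigma> * f1 (x t0) (y t0)) (\<sigma> * f2 (x t0) (y t0)) * E)
      (at_right 0)"
      using limit[of t0] by (intro tendsto_mult_right) simp
    show "\<forall>\<^sub>F h in at_right 0. Q t h \<le> Q t0 h * E"
      using eventually_at_right_less by (rule eventually_mono) (rule bound)
  qed (use limit \<open>t0 \<le> t\<close> in simp_all)
qed

lemma velocity_sign_persists:
  assumes "solves_in t0 x y" and "\<sigma> \<in> {-1, 1}" and "t0 \<le> t"
    and "0 \<le> \<sigma> * f1 (x t0) (y t0)" "0 \<le> \<sigma> * f2 (x t0) (y t0)"
  shows "0 \<le> \<sigma> * f1 (x t) (y t) \<and> 0 \<le> \<sigma> * f2 (x t) (y t)"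
proof -
  have "sqdist_nonneg_quadrant (\<sigma> * f1 (x t0) (y t0)) (\<sigma> * f2 (x t0) (y t0)) = 0"
    using assms(4,5) sqdist_nonneg_quadrant_eq_0_iff by blast
  then have "sqdist_nonneg_quadrant (\<sigma> * f1 (x t) (y t)) (\<sigma> * f2 (x t) (y t)) \<le> 0"
    using velocity_sqdist_bound[OF assms(1-3)] by simp
  then show ?thesis
    using sqdist_nonneg_quadrant_nonneg sqdist_nonneg_quadrant_eq_0_iff by (metis order_antisym)
qed

lemma velocity_continuous_on:
  assumes "solves_in t0 x y"
  shows "continuous_on {t0..} (\<lambda>t. f1 (x t) (y t))" and "continuous_on {t0..} (\<lambda>t. f2 (x t) (y t))"
proof -
  have "continuous_on {t0..} (\<lambda>t. (x t, y t))"
    using assms unfolding solves_in_def solves_def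
    by (intro continuous_at_imp_continuous_on ballI continuous_Pair) (auto intro: DERIV_isCont)
  moreover have "(\<lambda>t. (x t, y t)) ` {t0..} \<subseteq> X \<times> Y"
    using assms by (auto simp: solves_in_def)
  ultimately show "continuous_on {t0..} (\<lambda>t. f1 (x t) (y t))" "continuous_on {t0..} (\<lambda>t. f2 (x t) (y t))"
    using continuous_on_compose2[OF lipschitz_on_continuous_on[OF lipschitz_f1]]
      continuous_on_compose2[OF lipschitz_on_continuous_on[OF lipschitz_f2]] by fastforce+
qed

lemma solves_in_monotone_if_velocity_sign:
  assumes "solves_in t0 x y" and "\<sigma>1 \<in> {-1, 1}" "\<sigma>2 \<in> {-1, 1}"
    and "\<And>t. t0 \<le> t \<Longrightarrow> 0 \<le> \<sigma>1 * f1 (x t) (y t)" "\<And>t. t0 \<le> t \<Longrightarrow> 0 \<le> \<sigma>2 * f2 (x t) (y t)"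
  shows "(mono_on {t0..} x \<or> antimono_on {t0..} x) \<and> (mono_on {t0..} y \<or> antimono_on {t0..} y)"
  using assms
  by (intro conjI mono_on_Ici_if_derivative_sign[of \<sigma>1 _ _ "\<lambda>t. f1 (x t) (y t)"]
      mono_on_Ici_if_derivative_sign[of \<sigma>2 _ _ "\<lambda>t. f2 (x t) (y t)"]) (auto simp: solves_in_def solves_def)

lemma solves_in_eventually_monotone:
  assumes sol: "solves_in t0 x y"
  shows "\<exists>T\<ge>t0. (mono_on {T..} x \<or> antimono_on {T..} x) \<and> (mono_on {T..} y \<or> antimono_on {T..} y)"
proof (cases "\<exists>t1\<ge>t0. \<exists>\<sigma>\<in>{-1, 1}. 0 \<le> \<sigma> * f1 (x t1) (y t1) \<and> 0 \<le> \<sigma> * f2 (x t1) (y t1)")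
  case True
  then obtain t1 \<sigma> where "t0 \<le> t1" "\<sigma> \<in> {-1, 1}"
    and "0 \<le> \<sigma> * f1 (x t1) (y t1)" "0 \<le> \<sigma> * f2 (x t1) (y t1)"
    by blast
  then have "0 \<le> \<sigma> * f1 (x t) (y t)" "0 \<le> \<sigma> * f2 (x t) (y t)" if "t1 \<le> t" for t
    using velocity_sign_persists[OF solves_in_mono[OF sol \<open>t0 \<le> t1\<close>]] that by blast+
  then have "(mono_on {t1..} x \<or> antimono_on {t1..} x) \<and> (mono_on {t1..} y \<or> antimono_on {t1..} y)"
    by (intro solves_in_monotone_if_velocity_sign[OF solves_in_mono[OF sol \<open>t0 \<le> t1\<close>]
          \<open>\<sigma> \<in> {-1, 1}\<close> \<open>\<sigma> \<in> {-1, 1}\<close>])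
  with \<open>t0 \<le> t1\<close> show ?thesis
    by blast
next
  case False
  have "f1 (x t) (y t) \<noteq> 0 \<and> f2 (x t) (y t) \<noteq> 0" if "t0 \<le> t" for t
  proof -
    have "\<not> (0 \<le> 1 * f1 (x t) (y t) \<and> 0 \<le> 1 * f2 (x t) (y t))"
      "\<not> (0 \<le> -1 * f1 (x t) (y t) \<and> 0 \<le> -1 * f2 (x t) (y t))"
      using False that by blast+
    then show ?thesis by auto
  qed
  then obtain \<sigma>1 \<sigma>2 where \<sigma>1: "\<sigma>1 \<in> {-1, 1}" "\<And>t. t0 \<le> t \<Longrightarrow> 0 < \<sigma>1 * f1 (x t) (y t)"
    and \<sigma>2: "\<sigma>2 \<in> {-1, 1}" "\<And>t. t0 \<le> t \<Longrightarrow> 0 < \<sigma>2 * f2 (x t) (y t)"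
    using constant_sign_if_nonzero[OF velocity_continuous_on(1)[OF sol]]
      constant_sign_if_nonzero[OF velocity_continuous_on(2)[OF sol]] by metis
  then have "(mono_on {t0..} x \<or> antimono_on {t0..} x) \<and> (mono_on {t0..} y \<or> antimono_on {t0..} y)"
    using \<sigma>1(2) \<sigma>2(2) by (intro solves_in_monotone_if_velocity_sign[OF sol \<sigma>1(1) \<sigma>2(1)]) (simp_all add: less_imp_le)
  then show ?thesis
    by blast
qed

lemma solves_in_tendsto_equilibrium:
  assumes sol: "solves_in t0 x y" and "compact X" "compact Y"
  shows "\<exists>a b. f1 a b = 0 \<and> f2 a b = 0 \<and> (x \<longlongrightarrow> a) at_top \<and> (y \<longlongrightarrow> b) at_top"
proof -
  obtain T where "t0 \<le> T" and mono: "mono_on {T..} x \<or> antimono_on {T..} x" "mono_on {T..} y \<or> antimono_on {T..} y"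
    using solves_in_eventually_monotone[OF sol] by blast
  then have solT: "solves_in T x y"
    using sol solves_in_mono by blast
  then obtain a b where "a \<in> X" "(x \<longlongrightarrow> a) at_top" "b \<in> Y" "(y \<longlongrightarrow> b) at_top"
    using mono_bounded_convergent_at_top[OF mono(1) _ \<open>compact X\<close>]
      mono_bounded_convergent_at_top[OF mono(2) _ \<open>compact Y\<close>] by (metis solves_in_def)
  have "\<forall>\<^sub>F t in at_top. (x t, y t) \<in> X \<times> Y"
    unfolding eventually_at_top_linorder using solT by (auto simp: solves_in_def)
  then have lim: "((\<lambda>t. f1 (x t) (y t)) \<longlongrightarrow> f1 a b) at_top" "((\<lambda>t. f2 (x t) (y t)) \<longlongrightarrow> f2 a b) at_top"
    using continuous_on_tendsto_compose[OF lipschitz_on_continuous_on[OF lipschitz_f1]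
        tendsto_Pair[OF \<open>(x \<longlongrightarrow> a) at_top\<close> \<open>(y \<longlongrightarrow> b) at_top\<close>]]
      continuous_on_tendsto_compose[OF lipschitz_on_continuous_on[OF lipschitz_f2]
        tendsto_Pair[OF \<open>(x \<longlongrightarrow> a) at_top\<close> \<open>(y \<longlongrightarrow> b) at_top\<close>]]
      \<open>a \<in> X\<close> \<open>b \<in> Y\<close> by auto
  obtain C where C: "\<And>u. u \<in> X \<Longrightarrow> \<bar>u\<bar> \<le> C" "\<And>u. u \<in> Y \<Longrightarrow> \<bar>u\<bar> \<le> C"
    using compact_imp_bounded[OF compact_Un[OF \<open>compact X\<close> \<open>compact Y\<close>]] by (auto simp: bounded_real)
  have "f1 a b = 0"
    by (rule derivative_limit_zero_if_bounded[of T x _ _ C, OF _ lim(1)])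
      (use solT C in \<open>auto simp: solves_in_def solves_def\<close>)
  moreover have "f2 a b = 0"
    by (rule derivative_limit_zero_if_bounded[of T y _ _ C, OF _ lim(2)])
      (use solT C in \<open>auto simp: solves_in_def solves_def\<close>)
  ultimately show ?thesis
    using \<open>(x \<longlongrightarrow> a) at_top\<close> \<open>(y \<longlongrightarrow> b) at_top\<close> by blast
qed

end

section \<open>The two-layer energy balance model\<close>

lemma Fa_mono_right:
  assumes "0 \<le> lam" "0 \<le> epsa" "0 \<le> sigB" "y \<le> y'"
  shows "Fa lam q sigB epsa betaa x y \<le> Fa lam q sigB epsa betaa x y'"
proof -
  have "Fa lam q sigB epsa betaa x y' - Fa lam q sigB epsa betaa x y
      = lam * (y' - y) + epsa * sigB * (\<bar>y'\<bar>^3 * y' - \<bar>y\<bar>^3 * y)"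
    by (simp add: Fa_def algebra_simps)
  moreover have "0 \<le> \<bar>y'\<bar>^3 * y' - \<bar>y\<bar>^3 * y"
    using signed_quartic_mono[OF \<open>y \<le> y'\<close>] by simp
  moreover have "0 \<le> lam * (y' - y)" "0 \<le> epsa * sigB"
    using assms by simp_all
  ultimately show ?thesis
    by (smt (verit) mult_nonneg_nonneg)
qed

lemma Fs_mono_left:
  assumes "0 \<le> lam" "0 \<le> epsa" "0 \<le> sigB" "x \<le> x'"
  shows "Fs lam q sigB epsa betas x y \<le> Fs lam q sigB epsa betas x' y"
proof -
  have "Fs lam q sigB epsa betas x' y - Fs lam q sigB epsa betas x y
      = lam * (x' - x) + epsa * sigB * (\<bar>x'\<bar>^3 * x' - \<bar>x\<bar>^3 * x)"
    by (simp add: Fs_def algebra_simps)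
  moreover have "0 \<le> \<bar>x'\<bar>^3 * x' - \<bar>x\<bar>^3 * x"
    using signed_quartic_mono[OF \<open>x \<le> x'\<close>] by simp
  moreover have "0 \<le> lam * (x' - x)" "0 \<le> epsa * sigB"
    using assms by simp_all
  ultimately show ?thesis
    by (smt (verit) mult_nonneg_nonneg)
qed

lemma lipschitz_on_fst: "1-lipschitz_on U fst"
  and lipschitz_on_snd: "1-lipschitz_on U snd"
  by (simp_all add: lipschitz_on_def dist_fst_le dist_snd_le)

lemma lipschitz_on_box_components:
  assumes "C-lipschitz_on UNIV f" "0 \<le> A" "0 \<le> B"
  shows "(4 * A^3 * 1)-lipschitz_on ({-A..A} \<times> {-B..B}) (\<lambda>p. \<bar>fst p\<bar>^3 * fst p)"
    and "(4 * B^3 * 1)-lipschitz_on ({-A..A} \<times> {-B..B}) (\<lambda>p. \<bar>snd p\<bar>^3 * snd p)"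
    and "(C * 1)-lipschitz_on ({-A..A} \<times> {-B..B}) (\<lambda>p. f (fst p))"
    and "(C * 1)-lipschitz_on ({-A..A} \<times> {-B..B}) (\<lambda>p. f (snd p))"
  by (rule lipschitz_on_compose2[OF lipschitz_on_fst lipschitz_on_subset[OF signed_quartic_lipschitz_on]]
        lipschitz_on_compose2[OF lipschitz_on_snd lipschitz_on_subset[OF signed_quartic_lipschitz_on]]
        lipschitz_on_compose2[OF lipschitz_on_fst lipschitz_on_subset[OF assms(1)]]
        lipschitz_on_compose2[OF lipschitz_on_snd lipschitz_on_subset[OF assms(1)]];
      use assms in auto)+

lemma Fa_lipschitz_on_box:
  assumes "La-lipschitz_on UNIV betaa" "0 \<le> A" "0 \<le> B"
  shows "\<exists>K. K-lipschitz_on ({-A..A} \<times> {-B..B}) (\<lambda>(x, y). Fa lam q sigB epsa betaa x y)"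
proof -
  have eq: "(\<lambda>(x, y). Fa lam q sigB epsa betaa x y) = (\<lambda>p. - lam * (fst p - snd p)
      + epsa * sigB * (\<bar>snd p\<bar>^3 * snd p) - 2 * epsa * sigB * (\<bar>fst p\<bar>^3 * fst p) + q * betaa (fst p))"
    by (auto simp: Fa_def mult.assoc fun_eq_iff)
  show ?thesis
    unfolding eq by (rule exI, (rule lipschitz_on_add lipschitz_on_diff lipschitz_on_cmult_real
        lipschitz_on_box_components[OF assms] lipschitz_on_fst lipschitz_on_snd)+)
qed

lemma Fs_lipschitz_on_box:
  assumes "Ls-lipschitz_on UNIV betas" "0 \<le> A" "0 \<le> B"
  shows "\<exists>K. K-lipschitz_on ({-A..A} \<times> {-B..B}) (\<lambda>(x, y). Fs lam q sigB epsa betas x y)"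
proof -
  have eq: "(\<lambda>(x, y). Fs lam q sigB epsa betas x y) = (\<lambda>p. - lam * (snd p - fst p)
      - sigB * (\<bar>snd p\<bar>^3 * snd p) + epsa * sigB * (\<bar>fst p\<bar>^3 * fst p) + q * betas (snd p))"
    by (auto simp: Fs_def mult.assoc fun_eq_iff)
  show ?thesis
    unfolding eq by (rule exI, (rule lipschitz_on_add lipschitz_on_diff lipschitz_on_cmult_real
        lipschitz_on_box_components[OF assms] lipschitz_on_fst lipschitz_on_snd)+)
qed

lemma lipschitz_on_UNIV_le_affine:
  fixes f :: "real \<Rightarrow> real"
  assumes "L-lipschitz_on UNIV f" "0 \<le> x"
  shows "f x \<le> f 0 + L * x"
  using lipschitz_onD[OF assms(1), of x 0] assms(2) by (simp add: dist_real_def abs_le_iff)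

lemma Fa_Fs_at_scaled_corners:
  assumes "0 \<le> A" "0 \<le> k"
  shows "Fa lam q sigB epsa betaa A (k * A) = lam * (k - 1) * A + q * betaa A - epsa * sigB * (2 - k^4) * A^4"
    and "Fs lam q sigB epsa betas A (k * A) = lam * (1 - k) * A + q * betas (k * A) - sigB * (k^4 - epsa) * A^4"
    and "Fa lam q sigB epsa betaa (-A) (-(k * A))
      = lam * (1 - k) * A + q * betaa (-A) + epsa * sigB * (2 - k^4) * A^4"
    and "Fs lam q sigB epsa betas (-A) (-(k * A))
      = lam * (k - 1) * A + q * betas (-(k * A)) + sigB * (k^4 - epsa) * A^4"
proof -
  have "\<bar>A\<bar>^3 * A = A^4" "\<bar>k * A\<bar>^3 * (k * A) = k^4 * A^4"
    "\<bar>-A\<bar>^3 * (-A) = - (A^4)" "\<bar>-(k * A)\<bar>^3 * (-(k * A)) = - (k^4 * A^4)"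
    using assms by (simp_all add: abs_mult power_mult_distrib power4_eq_xxxx power3_eq_cube flip: power_Suc)
  then show "Fa lam q sigB epsa betaa A (k * A) = lam * (k - 1) * A + q * betaa A - epsa * sigB * (2 - k^4) * A^4"
    and "Fs lam q sigB epsa betas A (k * A) = lam * (1 - k) * A + q * betas (k * A) - sigB * (k^4 - epsa) * A^4"
    and "Fa lam q sigB epsa betaa (-A) (-(k * A))
      = lam * (1 - k) * A + q * betaa (-A) + epsa * sigB * (2 - k^4) * A^4"
    and "Fs lam q sigB epsa betas (-A) (-(k * A))
      = lam * (k - 1) * A + q * betas (-(k * A)) + sigB * (k^4 - epsa) * A^4"
    unfolding Fa_def Fs_def by (simp_all only: mult.assoc) (simp_all add: algebra_simps)
qed

lemma energy_balance_inward_box: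
  assumes "0 \<le> q" "0 < sigB" "0 < epsa" "epsa < 2"
    and La: "La-lipschitz_on UNIV betaa" and Ls: "Ls-lipschitz_on UNIV betas"
    and "\<And>x. 0 \<le> betaa x" "\<And>x. 0 \<le> betas x"
  shows "\<exists>A B. X \<le> A \<and> Y \<le> B \<and>
    Fa lam q sigB epsa betaa A B < 0 \<and> Fs lam q sigB epsa betas A B < 0 \<and>
    0 < Fa lam q sigB epsa betaa (-A) (-B) \<and> 0 < Fs lam q sigB epsa betas (-A) (-B)"
proof -
  \<comment> \<open>With \<open>B = k * A\<close> and \<open>epsa < k\<^sup>4 < 2\<close>, the quartic terms of both
    \<open>Fa\<close> and \<open>Fs\<close> at \<open>(A, B)\<close> are negative multiples of \<open>A\<^sup>4\<close>.\<close>
  define k where "k = root 4 ((epsa + 2) / 2)"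
  have "0 < k" "k^4 = (epsa + 2) / 2" using assms(3) by (simp_all add: k_def)
  define ma ms where "ma = epsa * sigB * (2 - k^4)" and "ms = sigB * (k^4 - epsa)"
  have "0 < ma" "0 < ms"
    using assms(2-4) \<open>k^4 = (epsa + 2) / 2\<close> by (simp_all add: ma_def ms_def)
  have "\<forall>\<^sub>F A in at_top. max 0 X \<le> A \<and> Y \<le> k * A \<and>
      (lam * (k - 1) + q * La) * A + q * betaa 0 < ma * A^4 \<and>
      (lam * (1 - k) + q * Ls * k) * A + q * betas 0 < ms * A^4 \<and>
      lam * (k - 1) * A + 0 < ma * A^4 \<and> lam * (1 - k) * A + 0 < ms * A^4"
    using \<open>0 < k\<close> \<open>0 < ma\<close> \<open>0 < ms\<close>
    by (intro eventually_conj eventually_ge_at_top eventually_lt_quartic_at_top) real_asymp+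
  then obtain A where "max 0 X \<le> A" "Y \<le> k * A"
    and A: "(lam * (k - 1) + q * La) * A + q * betaa 0 < ma * A^4"
      "(lam * (1 - k) + q * Ls * k) * A + q * betas 0 < ms * A^4"
      "lam * (k - 1) * A < ma * A^4" "lam * (1 - k) * A < ms * A^4"
    by (auto simp: eventually_at_top_linorder)
  then have "0 \<le> A" by simp
  have "(lam * (k - 1) + q * La) * A = lam * (k - 1) * A + q * La * A"
    "(lam * (1 - k) + q * Ls * k) * A = lam * (1 - k) * A + q * Ls * k * A"
    "lam * (1 - k) * A = - (lam * (k - 1) * A)"
    by (simp_all add: algebra_simps)
  moreover have "q * betaa A \<le> q * betaa 0 + q * La * A" "q * betas (k * A) \<le> q * betas 0 + q * Ls * k * A"
    using mult_left_mono[OF lipschitz_on_UNIV_le_affine[OF La \<open>0 \<le> A\<close>] \<open>0 \<le> q\<close>]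
      mult_left_mono[OF lipschitz_on_UNIV_le_affine[of Ls betas "k * A"] \<open>0 \<le> q\<close>] Ls \<open>0 \<le> A\<close> \<open>0 < k\<close>
    by (simp_all add: algebra_simps)
  moreover have "0 \<le> q * betaa (-A)" "0 \<le> q * betas (-(k * A))"
    using assms(1,7,8) by simp_all
  ultimately have "Fa lam q sigB epsa betaa A (k * A) < 0" "Fs lam q sigB epsa betas A (k * A) < 0"
    "0 < Fa lam q sigB epsa betaa (-A) (-(k * A))" "0 < Fs lam q sigB epsa betas (-A) (-(k * A))"
    using A unfolding Fa_Fs_at_scaled_corners[OF \<open>0 \<le> A\<close> less_imp_le[OF \<open>0 < k\<close>]] ma_def ms_def
    by linarith+
  with \<open>max 0 X \<le> A\<close> \<open>Y \<le> k * A\<close> show ?thesis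
    by (intro exI[of _ A] exI[of _ "k * A"]) simp
qed

lemma energy_balance_cooperative:
  assumes "0 < gama" "0 < gams" "0 \<le> lam" "0 \<le> epsa" "0 \<le> sigB"
  shows "cooperative_system (\<lambda>x y. Fa lam q sigB epsa betaa x y / gama)
    (\<lambda>x y. Fs lam q sigB epsa betas x y / gams)"
  by unfold_locales (use assms Fa_mono_right Fs_mono_left in \<open>auto intro: divide_right_mono\<close>)

lemma lipschitz_on_divide_const:
  fixes f :: "'a::metric_space \<Rightarrow> real"
  assumes "K-lipschitz_on U f" "0 < c"
  shows "(K / c)-lipschitz_on U (\<lambda>x. f x / c)"
  using lipschitz_on_cmult_real[OF assms(1), of "1 / c"] assms(2) by simp

lemma energy_balance_lipschitz_on_box:
  assumes "0 < gama" "0 < gams" "La-lipschitz_on UNIV betaa" "Ls-lipschitz_on UNIV betas" "0 \<le> A" "0 \<le> B"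
  shows "\<exists>L. L-lipschitz_on ({-A..A} \<times> {-B..B}) (\<lambda>(x, y). Fa lam q sigB epsa betaa x y / gama) \<and>
    L-lipschitz_on ({-A..A} \<times> {-B..B}) (\<lambda>(x, y). Fs lam q sigB epsa betas x y / gams)"
proof -
  obtain Ka Ks
    where "Ka-lipschitz_on ({-A..A} \<times> {-B..B}) (\<lambda>(x, y). Fa lam q sigB epsa betaa x y)"
      and "Ks-lipschitz_on ({-A..A} \<times> {-B..B}) (\<lambda>(x, y). Fs lam q sigB epsa betas x y)"
    using Fa_lipschitz_on_box[OF assms(3,5,6)] Fs_lipschitz_on_box[OF assms(4,5,6)] by blast
  then have lipschitz_scaled: "(Ka / gama)-lipschitz_on ({-A..A} \<times> {-B..B}) (\<lambda>(x, y). Fa lam q sigB epsa betaa x y / gama)"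
    "(Ks / gams)-lipschitz_on ({-A..A} \<times> {-B..B}) (\<lambda>(x, y). Fs lam q sigB epsa betas x y / gams)"
    using lipschitz_on_divide_const assms(1,2) by (simp_all add: case_prod_unfold)
  show ?thesis
    by (intro exI[of _ "max (Ka / gama) (Ks / gams)"] conjI
        lipschitz_on_mono[OF lipschitz_scaled(1) order_refl] lipschitz_on_mono[OF lipschitz_scaled(2) order_refl])
      simp_all
qed

lemma energy_balance_solution_trapped:
  assumes "0 < gama" "0 < gams" "0 \<le> lam" "0 \<le> q" "0 < sigB" "0 < epsa" "epsa < 2"
    and La: "La-lipschitz_on UNIV betaa" and Ls: "Ls-lipschitz_on UNIV betas"
    and "\<And>x. 0 \<le> betaa x" "\<And>x. 0 \<le> betas x"
    and f1: "f1 = (\<lambda>x y. Fa lam q sigB epsa betaa x y / gama)"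
    and f2: "f2 = (\<lambda>x y. Fs lam q sigB epsa betas x y / gams)"
    and sol: "cooperative_system.solves f1 f2 t0 x y"
  shows "\<exists>A B L. lipschitz_cooperative_system f1 f2 {-A..A} {-B..B} L \<and>
    lipschitz_cooperative_system.solves_in f1 f2 {-A..A} {-B..B} t0 x y"
proof -
  interpret cooperative_system f1 f2
    unfolding f1 f2 by (rule energy_balance_cooperative) (use assms in auto)
  obtain A B where "\<bar>x t0\<bar> \<le> A" "\<bar>y t0\<bar> \<le> B"
    and "Fa lam q sigB epsa betaa A B < 0" "Fs lam q sigB epsa betas A B < 0"
      "0 < Fa lam q sigB epsa betaa (-A) (-B)" "0 < Fs lam q sigB epsa betas (-A) (-B)"
    using energy_balance_inward_box[OF assms(4-11)] by blast
  then have corners: "f1 A B < 0" "f2 A B < 0" "0 < f1 (-A) (-B)" "0 < f2 (-A) (-B)"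
    using assms(1,2) by (simp_all add: f1 f2 divide_neg_pos)
  have box: "x t \<in> {-A..A} \<and> y t \<in> {-B..B}" if "t0 \<le> t" for t
    by (rule box_forward_invariant[OF sol _ _ corners that])
      (use \<open>\<bar>x t0\<bar> \<le> A\<close> \<open>\<bar>y t0\<bar> \<le> B\<close> in \<open>auto simp: abs_le_iff\<close>)
  obtain L where "L-lipschitz_on ({-A..A} \<times> {-B..B}) (\<lambda>(x, y). f1 x y)"
      and "L-lipschitz_on ({-A..A} \<times> {-B..B}) (\<lambda>(x, y). f2 x y)"
    using energy_balance_lipschitz_on_box[OF assms(1,2) La Ls, of A B] \<open>\<bar>x t0\<bar> \<le> A\<close> \<open>\<bar>y t0\<bar> \<le> B\<close>
    unfolding f1 f2 by (meson abs_ge_zero order_trans)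
  then interpret lipschitz_cooperative_system f1 f2 "{-A..A}" "{-B..B}" L
    by unfold_locales
  have "solves_in t0 x y"
    using sol box by (simp add: solves_in_def)
  then show ?thesis
    using lipschitz_cooperative_system_axioms by blast
qed

theorem theorem4p6:
  fixes gama gams lam q sigB epsa Ta0 Ts0 :: real
    and betaa betas Ta Ts :: "real \<Rightarrow> real"
  assumes "gama > 0" and "gams > 0" and "lam \<ge> 0" and "q > 0" and "sigB > 0"
    and "0 < epsa" and "epsa < 2"
    and "\<exists>L. L-lipschitz_on UNIV betaa" and "\<exists>L. L-lipschitz_on UNIV betas"
    and "\<And>x. betaa x \<ge> 0" and "\<And>x. betas x > 0"
    and "Ta0 \<ge> 0" and "Ts0 \<ge> 0"
    and "\<And>t. t \<ge> 0 \<Longrightarrow>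
           (Ta has_real_derivative (Fa lam q sigB epsa betaa (Ta t) (Ts t) / gama)) (at t within {0..})"
    and "\<And>t. t \<ge> 0 \<Longrightarrow>
           (Ts has_real_derivative (Fs lam q sigB epsa betas (Ta t) (Ts t) / gams)) (at t within {0..})"
    and "Ta 0 = Ta0" and "Ts 0 = Ts0"
  shows "(\<exists>p. is_equilibrium lam q sigB epsa betaa betas p \<and>
              ((\<lambda>t. (Ta t, Ts t)) \<longlongrightarrow> p) at_top)
         \<and> (\<exists>T\<ge>0. (mono_on {T..} Ta \<or> antimono_on {T..} Ta) \<and>
                    (mono_on {T..} Ts \<or> antimono_on {T..} Ts))"
proof -
  define f1 f2 where "f1 = (\<lambda>x y. Fa lam q sigB epsa betaa x y / gama)"
    and "f2 = (\<lambda>x y. Fs lam q sigB epsa betas x y / gams)"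
  obtain La Ls where La: "La-lipschitz_on UNIV betaa" and Ls: "Ls-lipschitz_on UNIV betas"
    using assms(8,9) by blast
  interpret cooperative_system f1 f2
    unfolding f1_def f2_def by (rule energy_balance_cooperative) (use assms in auto)
  \<comment> \<open>Start at time 1, where the one-sided derivatives are two-sided.\<close>
  have "solves 1 Ta Ts"
    using assms(14,15) by (intro solves_if_derivatives_within_Ici[of 0]) (simp_all add: f1_def f2_def)
  then obtain A B L where "lipschitz_cooperative_system f1 f2 {-A..A} {-B..B} L"
      and sol: "lipschitz_cooperative_system.solves_in f1 f2 {-A..A} {-B..B} 1 Ta Ts"
    using energy_balance_solution_trapped[OF assms(1-3) _ assms(5-7) La Ls assms(10) _ f1_def f2_def] assms(4,11)
    by (meson less_imp_le)
  then interpret lipschitz_cooperative_system f1 f2 "{-A..A}" "{-B..B}" L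
    by simp
  obtain T a b where "1 \<le> T" "mono_on {T..} Ta \<or> antimono_on {T..} Ta" "mono_on {T..} Ts \<or> antimono_on {T..} Ts"
    and "f1 a b = 0" "f2 a b = 0" "(Ta \<longlongrightarrow> a) at_top" "(Ts \<longlongrightarrow> b) at_top"
    using solves_in_eventually_monotone[OF sol] solves_in_tendsto_equilibrium[OF sol] by auto
  then show ?thesis
    using assms(1,2)
    by (intro conjI exI[of _ "(a, b)"] exI[of _ T] tendsto_Pair) (auto simp: is_equilibrium_def f1_def f2_def)
qed

end
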